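(* For all natural numbers $a,b$: - $O_{a+b}\prec E_{a+b}$; - $E_aO_b\prec E_{a+b}$; - $O_aE_b\prec E_{a+b}$; - $O_aO_b\prec O_{a+b}\prec E_aE_b$.
   Context: For natural numbers $c$, $E_c,O_c\in\mathbb{R}[x]$ are defined by $(u+1)^c=E_c(u^2)+uO_c(u^2)$. Relation $\prec$: for $A,B\in\mathbb{R}[x]$ with only real zeros, with zeros $\xi_1\le\cdots\le\xi_a$ of $A$ and $\theta_1\le\cdots\le\theta_b$ of $B$, $A\prec B$ means one of the following: - $\deg B=\deg A+1$ and $\theta_1\le\xi_1\le\theta_2\le\cdots\le\xi_a\le\theta_{a+1}$; - $\deg A=\deg B$ and $\xi_1\le\theta_1\le\cdots\le\xi_a\le\theta_a$. By convention $A\prec0$ and $0\prec A$ for any polynomial $A$ with only real zeros. *)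

theory Defs
  imports "HOL-Computational_Algebra.Polynomial" Complex_Main
begin

text \<open>E_c and O_c, defined by (u+1)^c = E_c(u^2) + u O_c(u^2).
  Here pcompose p [:0,0,1:] is p(u^2).\<close>

definition E_poly :: "nat \<Rightarrow> real poly" where
  "E_poly c = (THE ev. \<exists>od. [:1,1:] ^ c = pcompose ev [:0,0,1:] + [:0,1:] * pcompose od [:0,0,1:])"

definition O_poly :: "nat \<Rightarrow> real poly" where
  "O_poly c = (THE od. \<exists>ev. [:1,1:] ^ c = pcompose ev [:0,0,1:] + [:0,1:] * pcompose od [:0,0,1:])"

text \<open>A real polynomial has only real zeros: every complex zero is real
  (the zero polynomial is handled separately by the convention in prec).\<close>

definition real_rooted :: "real poly \<Rightarrow> bool" where
  "real_rooted p \<longleftrightarrow> (\<forall>z::complex. poly (map_poly of_real p) z = 0 \<longrightarrow> z \<in> \<real>)"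

definition zero_list :: "real poly \<Rightarrow> real list \<Rightarrow> bool" where
  "zero_list p xs \<longleftrightarrow> sorted xs \<and>
     p = smult (lead_coeff p) (\<Prod>x\<leftarrow>xs. [:-x, 1:])"

definition prec :: "real poly \<Rightarrow> real poly \<Rightarrow> bool" (infix "\<prec>\<^sub>p" 50) where
  "A \<prec>\<^sub>p B \<longleftrightarrow>
     (B = 0 \<and> (A = 0 \<or> real_rooted A)) \<or>
     (A = 0 \<and> (B = 0 \<or> real_rooted B)) \<or>
     (A \<noteq> 0 \<and> B \<noteq> 0 \<and> real_rooted A \<and> real_rooted B \<and>
      (\<exists>xs ys. zero_list A xs \<and> zero_list B ys \<and>
        ((degree B = degree A + 1 \<and>
           (\<forall>i<length xs. ys ! i \<le> xs ! i \<and> xs ! i \<le> ys ! (i + 1))) \<or>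
         (degree A = degree B \<and>
           (\<forall>i<length xs. xs ! i \<le> ys ! i \<and>
              (i + 1 < length xs \<longrightarrow> ys ! i \<le> xs ! (i + 1)))))))"

end

theory Submission
  imports Defs
begin

text \<open>
  Substituting u = i tan t in (1 + u)^c = E_c(u^2) + u O_c(u^2) and multiplying by cos^c t gives,
  by de Moivre, cos^c t E_c(-tan^2 t) = cos (c t) and cos^c t tan t O_c(-tan^2 t) = sin (c t).
  Hence, with the map g(s) = -tan^2 (pi s), which is decreasing on [0, 1/2), the zeros of E_c are
  the simple zeros g((j + 1/2)/c) for 0 <= j < c/2, and those of O_c are g(k/c) for 1 <= k < c/2;
  the zeros of a product are parametrised by the union of the parameter multisets.
  Since g is decreasing, the interlacing of two zero lists follows from two inequalities between
  the numbers of parameters below (resp. at most) a threshold r in (0, 1/2). For E_c these numbers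
  are ceil (c r - 1/2) and floor (c r + 1/2), for O_c they are ceil (c r) - 1 and floor (c r).
  With x = a r and y = b r every claim therefore reduces to
  ceil x + ceil y <= ceil (x + y) + 1, ceil (x + y) <= ceil x + ceil y and their floor analogues.
\<close>

section \<open>The polynomials E and O\<close>

definition even_binom_poly :: "nat \<Rightarrow> 'a::comm_ring_1 poly" where
  "even_binom_poly c = (\<Sum>k\<le>c. monom (of_nat (c choose (2*k))) k)"

definition odd_binom_poly :: "nat \<Rightarrow> 'a::comm_ring_1 poly" where
  "odd_binom_poly c = (\<Sum>k\<le>c. monom (of_nat (c choose (2*k+1))) k)"

lemma coeff_even_binom_poly: "coeff (even_binom_poly c) k = of_nat (c choose (2*k))"
  by (auto simp: even_binom_poly_def coeff_sum binomial_eq_0)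

lemma coeff_odd_binom_poly: "coeff (odd_binom_poly c) k = of_nat (c choose (2*k+1))"
  by (auto simp: odd_binom_poly_def coeff_sum binomial_eq_0)

lemma coeff_pcompose_square:
  "coeff (pcompose p [:0,0,1:]) n = (if even n then coeff p (n div 2) else (0::'a::comm_ring_1))"
proof (induction p arbitrary: n)
  case (pCons a p)
  have "[:0,0,1:] * q = pCons 0 (pCons 0 q)" for q :: "'a poly"
    by simp
  with pCons.IH show ?case
    by (cases n; cases "n - 1") (auto simp: pcompose_pCons coeff_pCons)
qed simp

lemma coeff_binomial_power: "coeff ([:1,1:] ^ c :: 'a::comm_ring_1 poly) n = of_nat (c choose n)"
proof (cases "n \<le> c")
  case False
  have "degree ([:1,1:] ^ c :: 'a poly) \<le> c"
    by (rule order.trans[OF degree_power_le]) simp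
  with False show ?thesis by (simp add: coeff_eq_0 binomial_eq_0)
qed (simp add: coeff_linear_poly_power)

lemma binomial_power_even_odd_split:
  "([:1,1:] ^ c :: 'a::comm_ring_1 poly) =
     pcompose (even_binom_poly c) [:0,0,1:] + [:0,1:] * pcompose (odd_binom_poly c) [:0,0,1:]"
proof (rule poly_eqI)
  fix n
  show "coeff ([:1,1:] ^ c :: 'a poly) n =
    coeff (pcompose (even_binom_poly c) [:0,0,1:] + [:0,1:] * pcompose (odd_binom_poly c) [:0,0,1:]) n"
    by (cases n) (auto simp: coeff_binomial_power coeff_pcompose_square coeff_even_binom_poly
        coeff_odd_binom_poly poly_0_coeff_0 elim!: oddE evenE)
qed

lemma even_odd_split_unique:
  fixes e d e' d' :: "'a::comm_ring_1 poly"
  assumes "pcompose e [:0,0,1:] + [:0,1:] * pcompose d [:0,0,1:] =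
           pcompose e' [:0,0,1:] + [:0,1:] * pcompose d' [:0,0,1:]"
  shows "e = e'" and "d = d'"
proof -
  from assms have coeffs_eq: "coeff (pcompose e [:0,0,1:] + [:0,1:] * pcompose d [:0,0,1:]) n =
           coeff (pcompose e' [:0,0,1:] + [:0,1:] * pcompose d' [:0,0,1:]) n" for n
    by simp
  have "coeff e k = coeff e' k" for k
    using coeffs_eq[of "2*k"] by (cases k) (simp_all add: coeff_pCons coeff_pcompose_square poly_0_coeff_0)
  moreover have "coeff d k = coeff d' k" for k
    using coeffs_eq[of "2*k+1"] by (simp add: coeff_pcompose_square)
  ultimately show "e = e'" and "d = d'"
    by (auto intro: poly_eqI)
qed

lemma E_poly_eq: "E_poly c = even_binom_poly c"
  unfolding E_poly_def
proof (rule the_equality)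
  show "\<exists>d. [:1,1:] ^ c = pcompose (even_binom_poly c) [:0,0,1:] + [:0,1:] * pcompose d [:0,0,1:]"
    using binomial_power_even_odd_split by blast
qed (metis binomial_power_even_odd_split even_odd_split_unique(1))

lemma O_poly_eq: "O_poly c = odd_binom_poly c"
  unfolding O_poly_def
proof (rule the_equality)
  show "\<exists>e. [:1,1:] ^ c = pcompose e [:0,0,1:] + [:0,1:] * pcompose (odd_binom_poly c) [:0,0,1:]"
    using binomial_power_even_odd_split by blast
qed (metis binomial_power_even_odd_split even_odd_split_unique(2))

lemma E_poly_0: "E_poly 0 = 1"
  by (simp add: E_poly_eq even_binom_poly_def)

lemma O_poly_0: "O_poly 0 = 0"
  by (simp add: O_poly_eq odd_binom_poly_def)

lemma poly_E_poly_0: "poly (E_poly c) 0 = 1"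
  by (simp add: E_poly_eq poly_0_coeff_0 coeff_even_binom_poly)

lemma poly_O_poly_0: "poly (O_poly c) 0 = c"
  by (simp add: O_poly_eq poly_0_coeff_0 coeff_odd_binom_poly)

lemma degree_E_poly: "degree (E_poly c) \<le> c div 2"
  by (rule degree_le) (auto simp: E_poly_eq coeff_even_binom_poly binomial_eq_0)

lemma degree_O_poly: "degree (O_poly c) \<le> (c - 1) div 2"
  by (rule degree_le) (auto simp: O_poly_eq coeff_odd_binom_poly binomial_eq_0)

lemma binomial_power_even_odd_eval:
  fixes u :: "'a::comm_ring_1"
  shows "(1 + u) ^ c = poly (even_binom_poly c) (u^2) + u * poly (odd_binom_poly c) (u^2)"
proof -
  have "(1 + u) ^ c = poly ([:1,1:] ^ c) u"
    by (simp add: add.commute)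
  also have "\<dots> = poly (pcompose (even_binom_poly c) [:0,0,1:] + [:0,1:] * pcompose (odd_binom_poly c) [:0,0,1:]) u"
    by (subst binomial_power_even_odd_split) (rule refl)
  finally show ?thesis
    by (simp add: poly_pcompose power2_eq_square)
qed

lemma poly_binom_poly_of_real:
  "poly (even_binom_poly c) (of_real x) = of_real (poly (even_binom_poly c) x)"
  "poly (odd_binom_poly c) (of_real x) = of_real (poly (odd_binom_poly c) x)"
  by (simp_all add: even_binom_poly_def odd_binom_poly_def poly_sum poly_monom)

lemma cos_power_binom_poly_tan:
  fixes x :: real
  assumes "cos x \<noteq> 0"
  shows "cos x ^ c * poly (even_binom_poly c) (- (tan x)\<^sup>2) = cos (real c * x)"
    and "cos x ^ c * tan x * poly (odd_binom_poly c) (- (tan x)\<^sup>2) = sin (real c * x)"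
proof -
  define u where "u = \<i> * complex_of_real (tan x)"
  have u_sq: "u\<^sup>2 = of_real (- (tan x)\<^sup>2)"
    by (simp add: u_def power_mult_distrib)
  have binomial_expansion: "(1 + u) ^ c = of_real (poly (even_binom_poly c) (- (tan x)\<^sup>2))
      + u * of_real (poly (odd_binom_poly c) (- (tan x)\<^sup>2))"
    using binomial_power_even_odd_eval[of u c] by (simp only: u_sq poly_binom_poly_of_real)
  have "of_real (cos x) * (1 + u) = cis x"
    using assms by (simp add: u_def tan_def complex_eq_iff)
  then have "cis (real c * x) = (of_real (cos x) * (1 + u)) ^ c"
    by (simp add: DeMoivre)
  also have "\<dots> = of_real (cos x ^ c) * (1 + u) ^ c"
    by (simp add: power_mult_distrib)
  also have "\<dots> = Complex (cos x ^ c * poly (even_binom_poly c) (- (tan x)\<^sup>2))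
                           (cos x ^ c * tan x * poly (odd_binom_poly c) (- (tan x)\<^sup>2))"
    unfolding binomial_expansion by (simp add: complex_eq_iff u_def)
  finally show "cos x ^ c * poly (even_binom_poly c) (- (tan x)\<^sup>2) = cos (real c * x)"
    and "cos x ^ c * tan x * poly (odd_binom_poly c) (- (tan x)\<^sup>2) = sin (real c * x)"
    by (simp_all add: complex_eq_iff)
qed

section \<open>Polynomials with a given multiset of real roots\<close>

lemma poly_eq_prod_of_zeros:
  fixes p :: "'a::idom poly"
  assumes "p \<noteq> 0" "finite S" "degree p \<le> card S" "\<And>x. x \<in> S \<Longrightarrow> poly p x = 0"
  shows "p = smult (lead_coeff p) (\<Prod>x\<in>S. [:-x, 1:])"
  using assms(2,1,3,4)
proof (induction S arbitrary: p rule: finite_induct)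
  case empty
  then show ?case
    by (metis degree_0_id card.empty le_zero_eq prod.empty smult_one)
next
  case (insert x S)
  obtain q where p: "p = [:-x, 1:] * q"
    using insert.prems(3) by (meson dvdE insertI1 poly_eq_0_iff_dvd)
  with insert.prems have "q \<noteq> 0" "degree q \<le> card S"
    by (auto simp: degree_mult_eq insert.hyps simp del: mult_pCons_left)
  moreover have "poly q y = 0" if "y \<in> S" for y
    using insert.prems(3)[of y] that insert.hyps(2) p by auto
  ultimately have "q = smult (lead_coeff q) (\<Prod>x\<in>S. [:-x, 1:])"
    using insert.IH by blast
  with p have "p = smult (lead_coeff q) ([:-x, 1:] * (\<Prod>x\<in>S. [:-x, 1:]))"
    by (metis mult_smult_right)
  moreover have "lead_coeff p = lead_coeff q"
    using p by (simp add: lead_coeff_mult del: mult_pCons_left)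
  ultimately show ?case
    using insert.hyps by (metis prod.insert)
qed

definition splits_with_roots :: "real poly \<Rightarrow> real multiset \<Rightarrow> bool" where
  "splits_with_roots p Z \<longleftrightarrow> p \<noteq> 0 \<and> p = smult (lead_coeff p) (\<Prod>z\<in>#Z. [:-z, 1:])"

lemma splits_with_rootsD:
  assumes "splits_with_roots p Z"
  shows "p \<noteq> 0" and "p = smult (lead_coeff p) (\<Prod>z\<in>#Z. [:-z, 1:])"
  using assms unfolding splits_with_roots_def by blast+

lemma splits_with_roots_of_zeros:
  assumes "p \<noteq> 0" "finite A" "inj_on f A" "degree p \<le> card A"
    and "\<And>a. a \<in> A \<Longrightarrow> poly p (f a) = 0"
  shows "splits_with_roots p (image_mset f (mset_set A))"
proof -
  have "p = smult (lead_coeff p) (\<Prod>x\<in>f ` A. [:-x, 1:])"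
    using assms by (intro poly_eq_prod_of_zeros) (auto simp: card_image)
  then show ?thesis
    using assms(1,3) by (simp add: splits_with_roots_def image_mset_mset_set prod_unfold_prod_mset)
qed

lemma splits_with_roots_mult:
  assumes "splits_with_roots p Z" "splits_with_roots q W"
  shows "splits_with_roots (p * q) (Z + W)"
proof -
  have "p * q = smult (lead_coeff p) (\<Prod>z\<in>#Z. [:-z, 1:]) * smult (lead_coeff q) (\<Prod>z\<in>#W. [:-z, 1:])"
    using splits_with_rootsD(2)[OF assms(1)] splits_with_rootsD(2)[OF assms(2)] by argo
  also have "\<dots> = smult (lead_coeff (p * q)) (\<Prod>z\<in>#Z + W. [:-z, 1:])"
    by (simp add: lead_coeff_mult mult_ac del: mult_pCons_left mult_pCons_right)
  finally show ?thesis
    using splits_with_rootsD(1)[OF assms(1)] splits_with_rootsD(1)[OF assms(2)]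
    by (simp add: splits_with_roots_def)
qed

lemma degree_prod_mset_linear: "degree (\<Prod>z\<in>#Z. [:-z, 1:] :: 'a::idom poly) = size Z"
proof (induction Z)
  case (add z Z)
  have "(\<Prod>z\<in>#Z. [:-z, 1:] :: 'a poly) \<noteq> 0"
    by auto
  with add show ?case
    by (simp add: degree_mult_eq del: mult_pCons_left)
qed simp

lemma degree_if_splits_with_roots:
  assumes "splits_with_roots p Z"
  shows "degree p = size Z"
proof -
  have "degree p = degree (smult (lead_coeff p) (\<Prod>z\<in>#Z. [:-z, 1:]))"
    using splits_with_rootsD(2)[OF assms] by (rule arg_cong)
  with splits_with_rootsD(1)[OF assms] show ?thesis
    by (simp add: degree_prod_mset_linear)
qed

lemma map_poly_of_real_mult:
  "map_poly complex_of_real (p * q) = map_poly of_real p * map_poly of_real q"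
  by (rule poly_eqI) (simp add: coeff_map_poly coeff_mult)

lemma poly_map_poly_of_real_prod_mset_linear:
  "poly (map_poly complex_of_real (\<Prod>z\<in>#Z. [:-z, 1:])) w = (\<Prod>z\<in>#Z. w - of_real z)"
  by (induction Z) (simp_all add: map_poly_of_real_mult map_poly_pCons del: mult_pCons_left)

lemma real_rooted_if_splits_with_roots:
  assumes "splits_with_roots p Z"
  shows "real_rooted p"
  unfolding real_rooted_def
proof (intro allI impI)
  fix w :: complex
  assume "poly (map_poly of_real p) w = 0"
  moreover have "map_poly complex_of_real p =
      smult (of_real (lead_coeff p)) (map_poly of_real (\<Prod>z\<in>#Z. [:-z, 1:]))"
    by (subst splits_with_rootsD(2)[OF assms]) (simp add: map_poly_smult)
  ultimately have "(\<Prod>z\<in>#Z. w - of_real z) = 0"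
    using splits_with_rootsD(1)[OF assms] by (simp add: poly_map_poly_of_real_prod_mset_linear)
  then show "w \<in> \<real>"
    by auto
qed

lemma zero_list_sorted_roots:
  assumes "splits_with_roots p Z"
  shows "zero_list p (sorted_list_of_multiset Z)"
  using splits_with_rootsD(2)[OF assms] unfolding zero_list_def
  by (simp add: prod_mset_prod_list[symmetric] multiset.map_comp)

section \<open>Interlacing from counting functions\<close>

lemma sorted_length_filter_ge_iff:
  fixes xs :: "'a::linorder list"
  assumes "sorted xs" "i < length xs" and up: "\<And>x y. x \<le> y \<Longrightarrow> P x \<Longrightarrow> P y"
  shows "length xs - i \<le> length (filter P xs) \<longleftrightarrow> P (xs ! i)"
proof
  assume "P (xs ! i)"
  then have "{i..<length xs} \<subseteq> {j. j < length xs \<and> P (xs ! j)}"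
    using assms by (auto intro: up[OF sorted_nth_mono[OF assms(1)]])
  then have "card {i..<length xs} \<le> card {j. j < length xs \<and> P (xs ! j)}"
    by (intro card_mono) auto
  then show "length xs - i \<le> length (filter P xs)"
    by (simp add: length_filter_conv_card)
next
  assume "length xs - i \<le> length (filter P xs)"
  show "P (xs ! i)"
  proof (rule ccontr)
    assume "\<not> P (xs ! i)"
    then have "{j. j < length xs \<and> P (xs ! j)} \<subseteq> {i<..<length xs}"
      using assms up[OF sorted_nth_mono[OF assms(1)]] by (force simp: not_less[symmetric])
    then have "card {j. j < length xs \<and> P (xs ! j)} \<le> card {i<..<length xs}"
      by (intro card_mono) auto
    with \<open>length xs - i \<le> length (filter P xs)\<close> \<open>i < length xs\<close> show False
      by (simp add: length_filter_conv_card)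
  qed
qed

lemma nth_le_nth_of_counts_greater:
  fixes xs ys :: "'a::linorder list"
  assumes "sorted xs" "sorted ys" "i < length xs" "j < length ys" "length ys - j \<le> length xs - i"
    and counts: "\<And>t. length (filter (\<lambda>x. t < x) xs) \<le> length (filter (\<lambda>x. t < x) ys)"
  shows "xs ! i \<le> ys ! j"
proof (rule ccontr)
  assume "\<not> xs ! i \<le> ys ! j"
  then have "length xs - i \<le> length (filter (\<lambda>x. ys ! j < x) xs)"
    using assms by (subst sorted_length_filter_ge_iff) auto
  moreover have "\<not> length ys - j \<le> length (filter (\<lambda>x. ys ! j < x) ys)"
    using assms by (subst sorted_length_filter_ge_iff) auto
  ultimately show False
    using counts[of "ys ! j"] assms(5) by linarith
qed

lemma nth_le_nth_of_counts_atleast: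
  fixes xs ys :: "'a::linorder list"
  assumes "sorted xs" "sorted ys" "i < length xs" "j < length ys" "length xs - i < length ys - j"
    and counts: "\<And>t. length (filter (\<lambda>y. t \<le> y) ys) \<le> length (filter (\<lambda>x. t \<le> x) xs) + 1"
  shows "ys ! j \<le> xs ! i"
proof (rule ccontr)
  assume "\<not> ys ! j \<le> xs ! i"
  then have "\<not> length xs - i \<le> length (filter (\<lambda>x. ys ! j \<le> x) xs)"
    using assms by (subst sorted_length_filter_ge_iff) auto
  moreover have "length ys - j \<le> length (filter (\<lambda>x. ys ! j \<le> x) ys)"
    using assms by (subst sorted_length_filter_ge_iff) auto
  ultimately show False
    using counts[of "ys ! j"] assms(5) by linarith
qed

lemma interlacing_of_counts:
  fixes xs ys :: "real list"
  assumes "sorted xs" "sorted ys"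
    and greater: "\<And>t. length (filter (\<lambda>x. t < x) xs) \<le> length (filter (\<lambda>x. t < x) ys)"
    and atleast: "\<And>t. length (filter (\<lambda>x. t \<le> x) ys) \<le> length (filter (\<lambda>x. t \<le> x) xs) + 1"
  shows "(length ys = length xs + 1 \<and> (\<forall>i<length xs. ys ! i \<le> xs ! i \<and> xs ! i \<le> ys ! (i + 1))) \<or>
         (length xs = length ys \<and>
           (\<forall>i<length xs. xs ! i \<le> ys ! i \<and> (i + 1 < length xs \<longrightarrow> ys ! i \<le> xs ! (i + 1))))"
proof -
  define t where "t = Min (insert 0 (set (xs @ ys))) - 1"
  have "t < x" if "x \<in> set (xs @ ys)" for x
  proof -
    have "Min (insert 0 (set (xs @ ys))) \<le> x"
      using that by (intro Min_le) auto
    then show ?thesis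
      by (simp add: t_def)
  qed
  then have "filter (\<lambda>x. t < x) xs = xs" "filter (\<lambda>x. t < x) ys = ys"
    "filter (\<lambda>x. t \<le> x) xs = xs" "filter (\<lambda>x. t \<le> x) ys = ys"
    by (auto simp: filter_id_conv less_imp_le)
  then have "length xs \<le> length ys" "length ys \<le> length xs + 1"
    using greater[of t] atleast[of t] by simp_all
  then consider "length ys = length xs + 1" | "length xs = length ys"
    by linarith
  then show ?thesis
  proof cases
    case 1
    then show ?thesis
      using nth_le_nth_of_counts_greater[OF assms(1,2) _ _ _ greater]
        nth_le_nth_of_counts_atleast[OF assms(1,2) _ _ _ atleast]
      by simp
  next
    case 2
    then show ?thesis
      using nth_le_nth_of_counts_greater[OF assms(1,2) _ _ _ greater]
        nth_le_nth_of_counts_atleast[OF assms(1,2) _ _ _ atleast]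
      by simp
  qed
qed

lemma length_sorted_list_of_multiset: "length (sorted_list_of_multiset Z) = size Z"
  by (metis mset_sorted_list_of_multiset size_mset)

lemma length_filter_sorted_list_of_multiset:
  "length (filter P (sorted_list_of_multiset Z)) = size (filter_mset P Z)"
  by (metis mset_filter mset_sorted_list_of_multiset size_mset)

lemma zero_prec: "B = 0 \<or> real_rooted B \<Longrightarrow> 0 \<prec>\<^sub>p B"
  by (auto simp: prec_def)

lemma prec_of_root_counts:
  assumes A: "splits_with_roots A ZA" and B: "splits_with_roots B ZB"
    and greater: "\<And>t. size (filter_mset (\<lambda>z. t < z) ZA) \<le> size (filter_mset (\<lambda>z. t < z) ZB)"
    and atleast: "\<And>t. size (filter_mset (\<lambda>z. t \<le> z) ZB) \<le> size (filter_mset (\<lambda>z. t \<le> z) ZA) + 1"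
  shows "A \<prec>\<^sub>p B"
proof -
  define xs where "xs = sorted_list_of_multiset ZA"
  define ys where "ys = sorted_list_of_multiset ZB"
  have "(length ys = length xs + 1 \<and> (\<forall>i<length xs. ys ! i \<le> xs ! i \<and> xs ! i \<le> ys ! (i + 1))) \<or>
        (length xs = length ys \<and>
          (\<forall>i<length xs. xs ! i \<le> ys ! i \<and> (i + 1 < length xs \<longrightarrow> ys ! i \<le> xs ! (i + 1))))"
    using greater atleast unfolding xs_def ys_def
    by (intro interlacing_of_counts) (simp_all add: length_filter_sorted_list_of_multiset)
  moreover have "degree A = length xs" "degree B = length ys"
    using A B by (simp_all add: xs_def ys_def degree_if_splits_with_roots length_sorted_list_of_multiset)
  moreover have "zero_list A xs" "zero_list B ys"
    using A B by (simp_all add: xs_def ys_def zero_list_sorted_roots)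
  ultimately show ?thesis
    using A B splits_with_rootsD(1) real_rooted_if_splits_with_roots unfolding prec_def by metis
qed

section \<open>Zeros parametrised by the angle\<close>

definition neg_tan_sq :: "real \<Rightarrow> real" where
  "neg_tan_sq s = - (tan (pi * s))\<^sup>2"

lemma neg_tan_sq_less_iff:
  assumes "s \<in> {0..<1/2}" "r \<in> {0..<1/2}"
  shows "neg_tan_sq r < neg_tan_sq s \<longleftrightarrow> s < r"
proof -
  have angles: "0 \<le> pi * s" "pi * s < pi/2" "0 \<le> pi * r" "pi * r < pi/2"
    using assms by auto
  then have "0 \<le> tan (pi * s)" "0 \<le> tan (pi * r)"
    by (auto intro: tan_pos_pi2_le)
  then have "neg_tan_sq r < neg_tan_sq s \<longleftrightarrow> tan (pi * s) < tan (pi * r)"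
    unfolding neg_tan_sq_def by (auto intro: power_strict_mono dest: power_less_imp_less_base)
  also have "\<dots> \<longleftrightarrow> pi * s < pi * r"
    using angles pi_gt_zero by (intro tan_mono_lt_eq) linarith+
  finally show ?thesis
    by simp
qed

lemma neg_tan_sq_le_iff:
  assumes "s \<in> {0..<1/2}" "r \<in> {0..<1/2}"
  shows "neg_tan_sq r \<le> neg_tan_sq s \<longleftrightarrow> s \<le> r"
  using neg_tan_sq_less_iff[OF assms(2,1)] by linarith

lemma inj_on_neg_tan_sq: "inj_on neg_tan_sq {0..<1/2}"
  by (rule inj_onI) (metis neg_tan_sq_less_iff linorder_neqE_linordered_idom less_irrefl)

lemma inj_on_neg_tan_sq_comp:
  assumes "inj_on f A" "f ` A \<subseteq> {0<..<1/2}"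
  shows "inj_on (neg_tan_sq \<circ> f) A"
  using assms by (intro comp_inj_on inj_on_subset[OF inj_on_neg_tan_sq]) auto

lemma neg_tan_sq_neg:
  assumes "s \<in> {0<..<1/2}"
  shows "neg_tan_sq s < 0"
proof -
  have "0 < tan (pi * s)"
    using assms by (intro tan_gt_zero) auto
  then show ?thesis
    by (simp add: neg_tan_sq_def)
qed

lemma neg_tan_sq_surj:
  assumes "t < 0"
  obtains r where "r \<in> {0<..<1/2}" "neg_tan_sq r = t"
proof
  show "arctan (sqrt (-t)) / pi \<in> {0<..<1/2}"
    using assms arctan_ubound[of "sqrt (-t)"] by (simp add: zero_less_arctan_iff field_simps)
  show "neg_tan_sq (arctan (sqrt (-t)) / pi) = t"
    using assms by (simp add: neg_tan_sq_def tan_arctan)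
qed

lemma size_filter_greater_neg_tan_sq:
  assumes "set_mset M \<subseteq> {0<..<1/2}" "r \<in> {0<..<1/2}"
  shows "size (filter_mset (\<lambda>z. neg_tan_sq r < z) (image_mset neg_tan_sq M)) =
    size (filter_mset (\<lambda>s. s < r) M)"
  using assms by (auto simp: filter_mset_image_mset neg_tan_sq_less_iff
      intro!: arg_cong[where f = size] filter_mset_cong)

lemma size_filter_atleast_neg_tan_sq:
  assumes "set_mset M \<subseteq> {0<..<1/2}" "r \<in> {0<..<1/2}"
  shows "size (filter_mset (\<lambda>z. neg_tan_sq r \<le> z) (image_mset neg_tan_sq M)) =
    size (filter_mset (\<lambda>s. s \<le> r) M)"
  using assms by (auto simp: filter_mset_image_mset neg_tan_sq_le_iff
      intro!: arg_cong[where f = size] filter_mset_cong)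

lemma filter_nonneg_neg_tan_sq_empty:
  assumes "set_mset M \<subseteq> {0<..<1/2}" "0 \<le> t"
  shows "filter_mset (\<lambda>z. t < z) (image_mset neg_tan_sq M) = {#}"
    and "filter_mset (\<lambda>z. t \<le> z) (image_mset neg_tan_sq M) = {#}"
  using assms neg_tan_sq_neg by (fastforce simp: filter_mset_eq_conv)+

lemma prec_of_param_counts:
  assumes A: "splits_with_roots A (image_mset neg_tan_sq MA)"
    and B: "splits_with_roots B (image_mset neg_tan_sq MB)"
    and MA: "set_mset MA \<subseteq> {0<..<1/2}" and MB: "set_mset MB \<subseteq> {0<..<1/2}"
    and less: "\<And>r. r \<in> {0<..<1/2} \<Longrightarrow> size (filter_mset (\<lambda>s. s < r) MA) \<le> size (filter_mset (\<lambda>s. s < r) MB)"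
    and at_most: "\<And>r. r \<in> {0<..<1/2} \<Longrightarrow> size (filter_mset (\<lambda>s. s \<le> r) MB) \<le> size (filter_mset (\<lambda>s. s \<le> r) MA) + 1"
  shows "A \<prec>\<^sub>p B"
proof (rule prec_of_root_counts[OF A B])
  fix t :: real
  show "size (filter_mset (\<lambda>z. t < z) (image_mset neg_tan_sq MA))
      \<le> size (filter_mset (\<lambda>z. t < z) (image_mset neg_tan_sq MB))"
  proof (cases "t < 0")
    case True
    then obtain r where "r \<in> {0<..<1/2}" "neg_tan_sq r = t"
      by (rule neg_tan_sq_surj)
    with less MA MB show ?thesis
      by (auto simp: size_filter_greater_neg_tan_sq)
  qed (simp add: filter_nonneg_neg_tan_sq_empty MA MB)
  show "size (filter_mset (\<lambda>z. t \<le> z) (image_mset neg_tan_sq MB))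
      \<le> size (filter_mset (\<lambda>z. t \<le> z) (image_mset neg_tan_sq MA)) + 1"
  proof (cases "t < 0")
    case True
    then obtain r where "r \<in> {0<..<1/2}" "neg_tan_sq r = t"
      by (rule neg_tan_sq_surj)
    with at_most MA MB show ?thesis
      by (auto simp: size_filter_atleast_neg_tan_sq)
  qed (simp add: filter_nonneg_neg_tan_sq_empty MA MB)
qed

lemma poly_E_poly_neg_tan_sq:
  assumes "s \<in> {0..<1/2}"
  shows "poly (E_poly c) (neg_tan_sq s) = cos (real c * pi * s) / cos (pi * s) ^ c"
proof -
  have "0 \<le> pi * s" "pi * s < pi / 2"
    using assms by auto
  then have "0 < cos (pi * s)"
    using pi_gt_zero by (intro cos_gt_zero_pi) linarith+
  then show ?thesis
    using cos_power_binom_poly_tan(1)[of "pi * s" c]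
    by (simp add: E_poly_eq neg_tan_sq_def field_simps)
qed

lemma poly_O_poly_neg_tan_sq:
  assumes "s \<in> {0<..<1/2}"
  shows "poly (O_poly c) (neg_tan_sq s) = sin (real c * pi * s) / (cos (pi * s) ^ c * tan (pi * s))"
proof -
  have "0 < pi * s" "pi * s < pi / 2"
    using assms by auto
  then have "0 < cos (pi * s)" "0 < tan (pi * s)"
    using pi_gt_zero by (intro cos_gt_zero_pi tan_gt_zero; linarith)+
  then show ?thesis
    using cos_power_binom_poly_tan(2)[of "pi * s" c]
    by (simp add: O_poly_eq neg_tan_sq_def field_simps)
qed

definition E_params :: "nat \<Rightarrow> real multiset" where
  "E_params c = image_mset (\<lambda>j. (real j + 1/2) / real c) (mset_set {..<c div 2})"

definition O_params :: "nat \<Rightarrow> real multiset" where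
  "O_params c = image_mset (\<lambda>k. real k / real c) (mset_set {1..(c - 1) div 2})"

lemma E_param_bounds:
  assumes "j < c div 2"
  shows "(real j + 1/2) / real c \<in> {0<..<1/2}"
proof -
  from assms have "2 * real j + 2 \<le> real c"
    by linarith
  then show ?thesis
    by (auto simp: field_simps)
qed

lemma O_param_bounds:
  assumes "k \<in> {1..(c - 1) div 2}"
  shows "real k / real c \<in> {0<..<1/2}"
proof -
  from assms have "2 * real k + 1 \<le> real c"
    by auto
  with assms show ?thesis
    by (auto simp: field_simps)
qed

lemma set_E_params: "set_mset (E_params c) \<subseteq> {0<..<1/2}"
  using E_param_bounds by (auto simp: E_params_def)

lemma set_O_params: "set_mset (O_params c) \<subseteq> {0<..<1/2}"
  using O_param_bounds by (auto simp: O_params_def)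

lemma splits_E_poly: "splits_with_roots (E_poly c) (image_mset neg_tan_sq (E_params c))"
proof -
  let ?f = "\<lambda>j. (real j + 1/2) / real c"
  have "E_poly c \<noteq> 0"
    using poly_E_poly_0[of c] by auto
  moreover have "inj_on (neg_tan_sq \<circ> ?f) {..<c div 2}"
    using E_param_bounds by (intro inj_on_neg_tan_sq_comp) (auto intro!: inj_onI simp: field_simps)
  moreover have "poly (E_poly c) (neg_tan_sq (?f j)) = 0" if "j < c div 2" for j
  proof -
    have "real c * pi * ?f j = pi * real j + pi / 2"
      using that by (auto simp: field_simps)
    then show ?thesis
      using E_param_bounds[OF that] by (simp add: poly_E_poly_neg_tan_sq cos_add)
  qed
  ultimately show ?thesis
    using splits_with_roots_of_zeros[of "E_poly c" "{..<c div 2}" "neg_tan_sq \<circ> ?f"] degree_E_poly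
    by (simp add: E_params_def multiset.map_comp)
qed

lemma splits_O_poly:
  assumes "c \<ge> 1"
  shows "splits_with_roots (O_poly c) (image_mset neg_tan_sq (O_params c))"
proof -
  let ?f = "\<lambda>k. real k / real c"
  have "O_poly c \<noteq> 0"
    using poly_O_poly_0[of c] assms by auto
  moreover have "inj_on (neg_tan_sq \<circ> ?f) {1..(c - 1) div 2}"
    using O_param_bounds assms by (intro inj_on_neg_tan_sq_comp) (auto intro!: inj_onI simp: field_simps)
  moreover have "poly (O_poly c) (neg_tan_sq (?f k)) = 0" if "k \<in> {1..(c - 1) div 2}" for k
  proof -
    have "real c * pi * ?f k = real k * pi"
      using assms by (auto simp: field_simps)
    then show ?thesis
      using O_param_bounds[OF that] by (simp add: poly_O_poly_neg_tan_sq)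
  qed
  ultimately show ?thesis
    using splits_with_roots_of_zeros[of "O_poly c" "{1..(c - 1) div 2}" "neg_tan_sq \<circ> ?f"] degree_O_poly
    by (simp add: O_params_def multiset.map_comp)
qed

section \<open>Counting the zero parameters\<close>

lemma less_nat_ceiling_iff: "j < nat \<lceil>w\<rceil> \<longleftrightarrow> real j < w"
  by (metis nat_ceiling_le_eq not_le)

lemma less_nat_floor_add_one_iff: "j < nat (\<lfloor>w\<rfloor> + 1) \<longleftrightarrow> real j \<le> w"
proof -
  have "j < nat (\<lfloor>w\<rfloor> + 1) \<longleftrightarrow> int j < \<lfloor>w\<rfloor> + 1"
    by (rule zless_nat_eq_int_zless)
  also have "\<dots> \<longleftrightarrow> int j \<le> \<lfloor>w\<rfloor>"
    by linarith
  also have "\<dots> \<longleftrightarrow> real j \<le> w"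
    by (metis le_floor_iff of_int_of_nat_eq)
  finally show ?thesis .
qed

lemma size_filter_image_mset_set:
  "finite A \<Longrightarrow> size (filter_mset P (image_mset f (mset_set A))) = card {a \<in> A. P (f a)}"
  by (simp add: filter_mset_image_mset filter_mset_mset_set)

lemma E_index_bound:
  assumes "r \<in> {0<..<1/2}" "real j \<le> real c * r - 1/2"
  shows "j < c div 2"
proof -
  have "real c * r < real c / 2"
    using assms by (cases "c = 0") auto
  with assms(2) have "2 * real j + 1 < real c"
    by linarith
  then show ?thesis
    by linarith
qed

lemma O_index_bound:
  assumes "r \<in> {0<..<1/2}" "real k \<le> real c * r" "c \<ge> 1"
  shows "k \<le> (c - 1) div 2"
proof -
  have "real c * r < real c / 2"
    using assms by simp
  with assms(2) have "2 * real k < real c"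
    by linarith
  then show ?thesis
    by linarith
qed

lemma size_E_params_less:
  assumes "r \<in> {0<..<1/2}"
  shows "int (size (filter_mset (\<lambda>s. s < r) (E_params c))) = \<lceil>real c * r - 1/2\<rceil>"
proof (cases "c = 0")
  case False
  have param_less: "(real j + 1/2) / real c < r \<longleftrightarrow> real j < real c * r - 1/2" for j
    using False by (simp add: field_simps)
  have "{j \<in> {..<c div 2}. (real j + 1/2) / real c < r} = {..<nat \<lceil>real c * r - 1/2\<rceil>}"
    by (auto simp: param_less less_nat_ceiling_iff dest: less_imp_le intro: E_index_bound[OF assms])
  moreover have "0 \<le> \<lceil>real c * r - 1/2\<rceil>"
  proof -
    have "0 \<le> real c * r"
      using assms by simp
    then show ?thesis
      by (simp add: le_ceiling_iff)
  qed
  ultimately show ?thesis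
    by (simp add: E_params_def size_filter_image_mset_set)
qed (simp add: E_params_def ceiling_eq_iff)

lemma size_E_params_at_most:
  assumes "r \<in> {0<..<1/2}"
  shows "int (size (filter_mset (\<lambda>s. s \<le> r) (E_params c))) = \<lfloor>real c * r - 1/2\<rfloor> + 1"
proof (cases "c = 0")
  case False
  have param_le: "(real j + 1/2) / real c \<le> r \<longleftrightarrow> real j \<le> real c * r - 1/2" for j
    using False by (simp add: field_simps)
  have "{j \<in> {..<c div 2}. (real j + 1/2) / real c \<le> r} = {..<nat (\<lfloor>real c * r - 1/2\<rfloor> + 1)}"
    by (auto simp: param_le less_nat_floor_add_one_iff intro: E_index_bound[OF assms])
  moreover have "0 \<le> \<lfloor>real c * r - 1/2\<rfloor> + 1"
  proof -
    have "0 \<le> real c * r"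
      using assms by simp
    then show ?thesis
      by linarith
  qed
  ultimately show ?thesis
    by (simp add: E_params_def size_filter_image_mset_set)
qed (simp add: E_params_def floor_eq_iff)

lemma size_O_params_less:
  assumes "r \<in> {0<..<1/2}" "c \<ge> 1"
  shows "int (size (filter_mset (\<lambda>s. s < r) (O_params c))) = \<lceil>real c * r\<rceil> - 1"
proof -
  have param_less: "real k / real c < r \<longleftrightarrow> real k < real c * r" for k
    using assms by (simp add: field_simps)
  have "{k \<in> {1..(c - 1) div 2}. real k / real c < r} = {1..<nat \<lceil>real c * r\<rceil>}"
    by (auto simp: param_less less_nat_ceiling_iff dest: less_imp_le intro: O_index_bound[OF assms(1) _ assms(2), unfolded One_nat_def])
  moreover have "1 \<le> \<lceil>real c * r\<rceil>"
    using assms by (simp add: le_ceiling_iff)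
  ultimately show ?thesis
    by (simp add: O_params_def size_filter_image_mset_set del: one_le_ceiling) arith
qed

lemma size_O_params_at_most:
  assumes "r \<in> {0<..<1/2}" "c \<ge> 1"
  shows "int (size (filter_mset (\<lambda>s. s \<le> r) (O_params c))) = \<lfloor>real c * r\<rfloor>"
proof -
  have param_le: "real k / real c \<le> r \<longleftrightarrow> real k \<le> real c * r" for k
    using assms by (simp add: field_simps)
  have "{k \<in> {1..(c - 1) div 2}. real k / real c \<le> r} = {1..<nat (\<lfloor>real c * r\<rfloor> + 1)}"
    by (auto simp: param_le less_nat_floor_add_one_iff intro: O_index_bound[OF assms(1) _ assms(2), unfolded One_nat_def])
  moreover have "0 \<le> \<lfloor>real c * r\<rfloor>"
    using assms by simp
  ultimately show ?thesis
    by (simp add: O_params_def size_filter_image_mset_set del: zero_le_floor)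
qed

lemma ceiling_add_ge: "\<lceil>x\<rceil> + \<lceil>y\<rceil> \<le> \<lceil>x + y\<rceil> + (1::int)" for x y :: real
proof -
  have "real_of_int (\<lceil>x\<rceil> + \<lceil>y\<rceil>) < of_int (\<lceil>x + y\<rceil> + 2)"
    using ceiling_correct[of x] ceiling_correct[of y] ceiling_correct[of "x + y"] by simp linarith
  then show ?thesis
    by linarith
qed

lemma floor_add_le: "\<lfloor>x + y\<rfloor> \<le> \<lfloor>x\<rfloor> + \<lfloor>y\<rfloor> + (1::int)" for x y :: real
proof -
  have "real_of_int \<lfloor>x + y\<rfloor> < of_int (\<lfloor>x\<rfloor> + \<lfloor>y\<rfloor> + 2)"
    using floor_correct[of x] floor_correct[of y] floor_correct[of "x + y"] by simp linarith
  then show ?thesis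
    by linarith
qed

lemma E_mult_O_prec_E: "E_poly a * O_poly b \<prec>\<^sub>p E_poly (a + b)"
proof (cases "b = 0")
  case True
  then show ?thesis
    using real_rooted_if_splits_with_roots[OF splits_E_poly] by (simp add: O_poly_0 zero_prec)
next
  case False
  then have "splits_with_roots (E_poly a * O_poly b) (image_mset neg_tan_sq (E_params a + O_params b))"
    using splits_with_roots_mult[OF splits_E_poly splits_O_poly] by simp
  then show ?thesis
  proof (rule prec_of_param_counts[OF _ splits_E_poly _ set_E_params])
    show "set_mset (E_params a + O_params b) \<subseteq> {0<..<1/2}"
      using set_E_params set_O_params by auto
    fix r :: real
    assume r: "r \<in> {0<..<1/2}"
    let ?x = "real a * r" and ?y = "real b * r"
    show "size (filter_mset (\<lambda>s. s < r) (E_params a + O_params b))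
        \<le> size (filter_mset (\<lambda>s. s < r) (E_params (a + b)))"
    proof -
      have "\<lceil>?x - 1/2\<rceil> + \<lceil>?y\<rceil> \<le> \<lceil>real (a + b) * r - 1/2\<rceil> + 1"
        using ceiling_add_ge[of "?x - 1/2" ?y] by (simp add: algebra_simps)
      then show ?thesis
        unfolding zle_int[symmetric] using r False
        by (simp add: size_E_params_less size_O_params_less del: of_nat_le_iff)
    qed
    show "size (filter_mset (\<lambda>s. s \<le> r) (E_params (a + b)))
        \<le> size (filter_mset (\<lambda>s. s \<le> r) (E_params a + O_params b)) + 1"
    proof -
      have "\<lfloor>real (a + b) * r - 1/2\<rfloor> \<le> \<lfloor>?x - 1/2\<rfloor> + \<lfloor>?y\<rfloor> + 1"
        using floor_add_le[of "?x - 1/2" ?y] by (simp add: algebra_simps)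
      then show ?thesis
        unfolding zle_int[symmetric] using r False
        by (simp add: size_E_params_at_most size_O_params_at_most del: of_nat_le_iff)
    qed
  qed
qed

lemma O_mult_O_prec_O: "O_poly a * O_poly b \<prec>\<^sub>p O_poly (a + b)"
proof (cases "a = 0 \<or> b = 0")
  case True
  have "O_poly (a + b) = 0 \<or> real_rooted (O_poly (a + b))"
    using real_rooted_if_splits_with_roots[OF splits_O_poly, of "a + b"] by (cases "a + b") (auto simp: O_poly_0)
  with True show ?thesis
    by (auto simp: O_poly_0 zero_prec)
next
  case False
  then have "splits_with_roots (O_poly a * O_poly b) (image_mset neg_tan_sq (O_params a + O_params b))"
    using splits_with_roots_mult[OF splits_O_poly splits_O_poly] by simp
  moreover have "splits_with_roots (O_poly (a + b)) (image_mset neg_tan_sq (O_params (a + b)))"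
    using False by (intro splits_O_poly) simp
  ultimately show ?thesis
  proof (rule prec_of_param_counts[OF _ _ _ set_O_params])
    show "set_mset (O_params a + O_params b) \<subseteq> {0<..<1/2}"
      using set_O_params by auto
    fix r :: real
    assume r: "r \<in> {0<..<1/2}"
    let ?x = "real a * r" and ?y = "real b * r"
    show "size (filter_mset (\<lambda>s. s < r) (O_params a + O_params b))
        \<le> size (filter_mset (\<lambda>s. s < r) (O_params (a + b)))"
    proof -
      have "\<lceil>?x\<rceil> + \<lceil>?y\<rceil> \<le> \<lceil>real (a + b) * r\<rceil> + 1"
        using ceiling_add_ge[of ?x ?y] by (simp add: algebra_simps)
      then show ?thesis
        unfolding zle_int[symmetric] using r False
        by (simp add: size_O_params_less del: of_nat_le_iff)
    qed
    show "size (filter_mset (\<lambda>s. s \<le> r) (O_params (a + b)))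
        \<le> size (filter_mset (\<lambda>s. s \<le> r) (O_params a + O_params b)) + 1"
    proof -
      have "\<lfloor>real (a + b) * r\<rfloor> \<le> \<lfloor>?x\<rfloor> + \<lfloor>?y\<rfloor> + 1"
        using floor_add_le[of ?x ?y] by (simp add: algebra_simps)
      then show ?thesis
        unfolding zle_int[symmetric] using r False
        by (simp add: size_O_params_at_most del: of_nat_le_iff)
    qed
  qed
qed

lemma O_prec_E_mult_E: "O_poly (a + b) \<prec>\<^sub>p E_poly a * E_poly b"
proof (cases "a + b = 0")
  case True
  then show ?thesis
    using real_rooted_if_splits_with_roots[OF splits_with_roots_mult[OF splits_E_poly splits_E_poly]]
    by (simp add: O_poly_0 zero_prec)
next
  case False
  then have ab: "1 \<le> a + b"
    by linarith
  have "splits_with_roots (O_poly (a + b)) (image_mset neg_tan_sq (O_params (a + b)))"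
    using splits_O_poly[OF ab] .
  moreover have "splits_with_roots (E_poly a * E_poly b) (image_mset neg_tan_sq (E_params a + E_params b))"
    using splits_with_roots_mult[OF splits_E_poly splits_E_poly] by simp
  ultimately show ?thesis
  proof (rule prec_of_param_counts[OF _ _ set_O_params])
    show "set_mset (E_params a + E_params b) \<subseteq> {0<..<1/2}"
      using set_E_params by auto
    fix r :: real
    assume r: "r \<in> {0<..<1/2}"
    let ?x = "real a * r" and ?y = "real b * r"
    show "size (filter_mset (\<lambda>s. s < r) (O_params (a + b)))
        \<le> size (filter_mset (\<lambda>s. s < r) (E_params a + E_params b))"
    proof -
      have "\<lceil>real (a + b) * r\<rceil> - 1 \<le> \<lceil>?x - 1/2\<rceil> + \<lceil>?y - 1/2\<rceil>"
        using ceiling_add_le[of "?x - 1/2" "?y - 1/2"] by (simp add: algebra_simps)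
      then show ?thesis
        unfolding zle_int[symmetric] using r ab
        by (simp add: size_O_params_less size_E_params_less del: of_nat_le_iff)
    qed
    show "size (filter_mset (\<lambda>s. s \<le> r) (E_params a + E_params b))
        \<le> size (filter_mset (\<lambda>s. s \<le> r) (O_params (a + b))) + 1"
    proof -
      have "\<lfloor>?x - 1/2\<rfloor> + \<lfloor>?y - 1/2\<rfloor> \<le> \<lfloor>real (a + b) * r\<rfloor> - 1"
        using le_floor_add[of "?x - 1/2" "?y - 1/2"] by (simp add: algebra_simps)
      then show ?thesis
        unfolding zle_int[symmetric] using r ab
        by (simp add: size_O_params_at_most size_E_params_at_most del: of_nat_le_iff)
    qed
  qed
qed

theorem lemma3p1:
  fixes a b :: nat
  shows "O_poly (a + b) \<prec>\<^sub>p E_poly (a + b) \<and>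
         E_poly a * O_poly b \<prec>\<^sub>p E_poly (a + b) \<and>
         O_poly a * E_poly b \<prec>\<^sub>p E_poly (a + b) \<and>
         O_poly a * O_poly b \<prec>\<^sub>p O_poly (a + b) \<and>
         O_poly (a + b) \<prec>\<^sub>p E_poly a * E_poly b"
  using E_mult_O_prec_E[of 0 "a + b"] E_mult_O_prec_E[of a b] E_mult_O_prec_E[of b a]
    O_mult_O_prec_O[of a b] O_prec_E_mult_E[of a b]
  by (simp add: E_poly_0 mult.commute add.commute)

end
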